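(* Let $n\ge 5$ and let $T(n)$ be the triangular graph. The complement $\overline{T(n)}$ of $T(n)$ is a Neumaier graph if and only if $n$ is even. In this case, if $\overline{T(n)}$ is a (strongly regular) Neumaier graph with parameters $(\binom{n}{2},k,\lambda,\mu;a,c)$, then $n=2a+4$ and $c=a+2$.
   Context: The triangular graph $T(n)$ ($n\ge5$) is the line graph of the complete graph $K_n$: its vertices are the 2-subsets of $\{1,\dots,n\}$, two being adjacent iff they intersect; $T(n)$ and its complement are strongly regular. A graph is edge-regular with parameters $(n,k,\lambda)$ if it has $n$ vertices, is $k$-regular, and any two adjacent vertices have exactly $\lambda$ common neighbours. A clique $C$ is a regular clique with nexus $a$ if every vertex not in $C$ has exactly $a$ neighbours in $C$. A Neumaier graph is a non-complete edge-regular graph containing a regular clique; it has parameters $(n,k,\lambda;a,c)$ if it is edge-regular with parameters $(n,k,\lambda)$ and contains a regular clique of size $c$ with nexus $a$. A strongly regular Neumaier graph with parameters $(n,k,\lambda,\mu;a,c)$ is a strongly regular graph with parameters $(n,k,\lambda,\mu)$ (non-complete, connected, $k$-regular, adjacent vertices having $\lambda$ and non-adjacent vertices having $\mu$ common neighbours) which is a Neumaier graph with parameters $(n,k,\lambda;a,c)$. *)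

theory Defs
  imports Main
begin

text \<open>Simple graphs are given by a vertex set V and a symmetric irreflexive
adjacency relation E (only its restriction to V matters).\<close>

definition nbrs :: "'a set \<Rightarrow> ('a \<Rightarrow> 'a \<Rightarrow> bool) \<Rightarrow> 'a \<Rightarrow> 'a set" where
  "nbrs V E v = {w \<in> V. E v w}"

definition is_graph :: "'a set \<Rightarrow> ('a \<Rightarrow> 'a \<Rightarrow> bool) \<Rightarrow> bool" where
  "is_graph V E \<longleftrightarrow> finite V \<and> (\<forall>v\<in>V. \<not> E v v) \<and> (\<forall>v\<in>V. \<forall>w\<in>V. E v w \<longrightarrow> E w v)"

definition is_complete :: "'a set \<Rightarrow> ('a \<Rightarrow> 'a \<Rightarrow> bool) \<Rightarrow> bool" where
  "is_complete V E \<longleftrightarrow> (\<forall>v\<in>V. \<forall>w\<in>V. v \<noteq> w \<longrightarrow> E v w)"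

definition is_connected :: "'a set \<Rightarrow> ('a \<Rightarrow> 'a \<Rightarrow> bool) \<Rightarrow> bool" where
  "is_connected V E \<longleftrightarrow> (\<forall>v\<in>V. \<forall>w\<in>V. (\<lambda>x y. x \<in> V \<and> y \<in> V \<and> E x y)\<^sup>*\<^sup>* v w)"

definition edge_regular ::
  "'a set \<Rightarrow> ('a \<Rightarrow> 'a \<Rightarrow> bool) \<Rightarrow> nat \<Rightarrow> nat \<Rightarrow> nat \<Rightarrow> bool" where
  "edge_regular V E nv k lam \<longleftrightarrow> is_graph V E \<and> card V = nv \<and>
     (\<forall>v\<in>V. card (nbrs V E v) = k) \<and>
     (\<forall>v\<in>V. \<forall>w\<in>V. E v w \<longrightarrow> card (nbrs V E v \<inter> nbrs V E w) = lam)"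

definition is_clique :: "'a set \<Rightarrow> ('a \<Rightarrow> 'a \<Rightarrow> bool) \<Rightarrow> 'a set \<Rightarrow> bool" where
  "is_clique V E C \<longleftrightarrow> C \<noteq> {} \<and> C \<subseteq> V \<and> (\<forall>v\<in>C. \<forall>w\<in>C. v \<noteq> w \<longrightarrow> E v w)"

definition regular_clique :: "'a set \<Rightarrow> ('a \<Rightarrow> 'a \<Rightarrow> bool) \<Rightarrow> 'a set \<Rightarrow> nat \<Rightarrow> bool" where
  "regular_clique V E C a \<longleftrightarrow> is_clique V E C \<and>
     (\<forall>v\<in>V - C. card (nbrs V E v \<inter> C) = a)"

definition neumaier_graph :: "'a set \<Rightarrow> ('a \<Rightarrow> 'a \<Rightarrow> bool) \<Rightarrow> bool" where
  "neumaier_graph V E \<longleftrightarrow> \<not> is_complete V E \<and>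
     (\<exists>k lam. edge_regular V E (card V) k lam) \<and> (\<exists>C a. regular_clique V E C a)"

definition neumaier_params ::
  "'a set \<Rightarrow> ('a \<Rightarrow> 'a \<Rightarrow> bool) \<Rightarrow> nat \<Rightarrow> nat \<Rightarrow> nat \<Rightarrow> nat \<Rightarrow> nat \<Rightarrow> bool" where
  "neumaier_params V E nv k lam a c \<longleftrightarrow> \<not> is_complete V E \<and> edge_regular V E nv k lam \<and>
     (\<exists>C. regular_clique V E C a \<and> card C = c)"

definition strongly_regular ::
  "'a set \<Rightarrow> ('a \<Rightarrow> 'a \<Rightarrow> bool) \<Rightarrow> nat \<Rightarrow> nat \<Rightarrow> nat \<Rightarrow> nat \<Rightarrow> bool" where
  "strongly_regular V E nv k lam mu \<longleftrightarrow> is_graph V E \<and> card V = nv \<and>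
     \<not> is_complete V E \<and> is_connected V E \<and>
     (\<forall>v\<in>V. card (nbrs V E v) = k) \<and>
     (\<forall>v\<in>V. \<forall>w\<in>V. E v w \<longrightarrow> card (nbrs V E v \<inter> nbrs V E w) = lam) \<and>
     (\<forall>v\<in>V. \<forall>w\<in>V. v \<noteq> w \<longrightarrow> \<not> E v w \<longrightarrow> card (nbrs V E v \<inter> nbrs V E w) = mu)"

definition srg_neumaier_params ::
  "'a set \<Rightarrow> ('a \<Rightarrow> 'a \<Rightarrow> bool) \<Rightarrow> nat \<Rightarrow> nat \<Rightarrow> nat \<Rightarrow> nat \<Rightarrow> nat \<Rightarrow> nat \<Rightarrow> bool" where
  "srg_neumaier_params V E nv k lam mu a c \<longleftrightarrow>
     strongly_regular V E nv k lam mu \<and> neumaier_params V E nv k lam a c"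

definition tri_vertices :: "nat \<Rightarrow> nat set set" where
  "tri_vertices n = {S. S \<subseteq> {1..n} \<and> card S = 2}"

definition tri_adj :: "nat set \<Rightarrow> nat set \<Rightarrow> bool" where
  "tri_adj S T \<longleftrightarrow> S \<noteq> T \<and> S \<inter> T \<noteq> {}"

definition tri_compl_adj :: "nat set \<Rightarrow> nat set \<Rightarrow> bool" where
  "tri_compl_adj S T \<longleftrightarrow> S \<noteq> T \<and> \<not> tri_adj S T"

end

theory Submission
  imports Defs
begin

(* In the complement of T(n) a clique is a family C of pairwise disjoint pairs, and a pair T
   outside C is adjacent to exactly |C| - |T \<inter> \<Union>C| members of C.  Hence C is regular
   iff all pairs outside C meet \<Union>C in the same number of points.  For n >= 4 this forces C
   to be a perfect matching: for an uncovered point p, a covered point x and any third point u,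
   the pair {p, x} meets \<Union>C once, whereas {x, u} meets it twice or {p, u} not at all.
   Then n = 2|C| and the nexus is |C| - 2.  Conversely, for even n a perfect matching is a
   regular clique, and the complement of T(n) is edge-regular. *)

lemma card_disjoint_members_add_card_Int_Union:
  assumes fin: "finite C" and disj: "pairwise disjnt C"
    and pairs: "\<And>S. S \<in> C \<Longrightarrow> card S = 2" and T: "card T = 2" "T \<notin> C"
  shows "card {S \<in> C. S \<inter> T = {}} + card (T \<inter> \<Union>C) = card C"
proof -
  have "finite T" using T by (metis card.infinite zero_neq_numeral)
  have meet: "card (T \<inter> S) = (if S \<inter> T \<noteq> {} then 1 else 0)" if "S \<in> C" for S
  proof -
    have "T \<inter> S \<noteq> T"
      using that T pairs[OF that] card_subset_eq[of S T]
      by (metis Int_lower2 card.infinite zero_neq_numeral)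
    then have "card (T \<inter> S) < 2"
      using T \<open>finite T\<close> by (metis Int_lower1 card_seteq not_le)
    moreover have "card (T \<inter> S) = 0 \<longleftrightarrow> S \<inter> T = {}"
      using \<open>finite T\<close> by (auto simp: Int_commute)
    ultimately show ?thesis by auto
  qed
  have "card (T \<inter> \<Union>C) = card (\<Union>S\<in>C. T \<inter> S)"
    by (simp only: Int_Union)
  also have "\<dots> = (\<Sum>S\<in>C. card (T \<inter> S))"
    using fin disj \<open>finite T\<close> by (intro card_UN_disjoint) (auto simp: pairwise_def disjnt_def)
  also have "\<dots> = (\<Sum>S\<in>C. if S \<inter> T \<noteq> {} then 1 else 0)"
    using meet by (rule sum.cong[OF refl])
  also have "\<dots> = card {S \<in> C. S \<inter> T \<noteq> {}}"
    using fin by (simp only: sum.inter_filter[symmetric] card_eq_sum)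
  finally have "card (T \<inter> \<Union>C) = card {S \<in> C. S \<inter> T \<noteq> {}}" .
  moreover have "card {S \<in> C. S \<inter> T = {}} + card {S \<in> C. S \<inter> T \<noteq> {}} = card C"
    using fin by (subst card_Un_disjoint[symmetric]) (auto intro: arg_cong[where f = card])
  ultimately show ?thesis by simp
qed

lemma doubleton_notin_disjoint_family:
  assumes "pairwise disjnt C" "S \<in> C" "x \<in> S" "u \<notin> S"
  shows "{x, u} \<notin> C"
proof
  assume "{x, u} \<in> C"
  moreover have "{x, u} \<noteq> S" using assms(4) by auto
  ultimately have "disjnt {x, u} S" using pairwiseD[OF assms(1)] assms(2) by blast
  then show False using assms(3) by (simp add: disjnt_def)
qed

lemma ex_in_atLeastAtMost_notin:
  fixes n :: nat
  assumes "finite A" "card A < n"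
  obtains u where "u \<in> {1..n}" "u \<notin> A"
proof -
  have "\<not> {1..n} \<subseteq> A"
  proof
    assume "{1..n} \<subseteq> A"
    then have "card {1..n} \<le> card A" by (rule card_mono[OF assms(1)])
    then show False using assms(2) by simp
  qed
  then show ?thesis using that by blast
qed

lemma tri_compl_adj_iff: "tri_compl_adj S T \<longleftrightarrow> S \<noteq> T \<and> S \<inter> T = {}"
  unfolding tri_compl_adj_def tri_adj_def by auto

lemma finite_tri_vertices: "finite (tri_vertices n)"
  by (rule finite_subset[of _ "Pow {1..n}"]) (auto simp: tri_vertices_def)

lemma card_tri_vertices: "card (tri_vertices n) = n choose 2"
  using n_subsets[of "{1..n}" 2] by (simp add: tri_vertices_def)

lemma doubleton_in_tri_vertices:
  "x \<noteq> y \<Longrightarrow> x \<in> {1..n} \<Longrightarrow> y \<in> {1..n} \<Longrightarrow> {x, y} \<in> tri_vertices n"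
  by (simp add: tri_vertices_def)

lemma is_graph_tri_compl: "is_graph (tri_vertices n) tri_compl_adj"
  unfolding is_graph_def tri_compl_adj_iff using finite_tri_vertices by auto

lemma not_complete_tri_compl:
  assumes "n \<ge> 3"
  shows "\<not> is_complete (tri_vertices n) tri_compl_adj"
proof
  assume "is_complete (tri_vertices n) tri_compl_adj"
  moreover have "{1, 2} \<in> tri_vertices n" "{1, 3} \<in> tri_vertices n"
    using assms by (auto intro!: doubleton_in_tri_vertices)
  moreover have "{1, 2} \<noteq> ({1, 3} :: nat set)"
    by (simp add: doubleton_eq_iff)
  ultimately have "tri_compl_adj {1, 2} {1, 3}"
    unfolding is_complete_def by simp
  then show False by (simp add: tri_compl_adj_iff)
qed

lemma nbrs_tri_compl:
  assumes "S \<in> tri_vertices n"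
  shows "nbrs (tri_vertices n) tri_compl_adj S = {T. T \<subseteq> {1..n} - S \<and> card T = 2}"
proof -
  have "S \<noteq> {}" using assms by (auto simp: tri_vertices_def)
  then show ?thesis unfolding nbrs_def tri_compl_adj_iff tri_vertices_def by auto
qed

lemma edge_regular_tri_compl:
  "edge_regular (tri_vertices n) tri_compl_adj (n choose 2) ((n - 2) choose 2) ((n - 4) choose 2)"
proof -
  have card_diff: "card ({1..n} - A) = n - card A" if "A \<subseteq> {1..n}" for A
    using card_Diff_subset[OF finite_subset[OF that] that] by simp
  have degree: "card (nbrs (tri_vertices n) tri_compl_adj S) = (n - 2) choose 2"
    if "S \<in> tri_vertices n" for S
    using that n_subsets[of "{1..n} - S" 2] card_diff[of S]
    unfolding nbrs_tri_compl[OF that] by (simp add: tri_vertices_def)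
  have common: "card (nbrs (tri_vertices n) tri_compl_adj S \<inter> nbrs (tri_vertices n) tri_compl_adj T)
      = (n - 4) choose 2"
    if "S \<in> tri_vertices n" "T \<in> tri_vertices n" "tri_compl_adj S T" for S T
  proof -
    have S: "card S = 2" "S \<subseteq> {1..n}" and T: "card T = 2" "T \<subseteq> {1..n}"
      using that(1,2) by (simp_all add: tri_vertices_def)
    moreover have "S \<inter> T = {}" using that(3) by (simp add: tri_compl_adj_iff)
    ultimately have "card (S \<union> T) = 4" "S \<union> T \<subseteq> {1..n}"
      using card_Un_disjoint[of S T] by (auto simp: card_ge_0_finite)
    moreover have "nbrs (tri_vertices n) tri_compl_adj S \<inter> nbrs (tri_vertices n) tri_compl_adj T
      = {B. B \<subseteq> {1..n} - (S \<union> T) \<and> card B = 2}"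
      using that by (auto simp: nbrs_tri_compl)
    ultimately show ?thesis
      using n_subsets[of "{1..n} - (S \<union> T)" 2] card_diff[of "S \<union> T"] by simp
  qed
  show ?thesis
    unfolding edge_regular_def using is_graph_tri_compl card_tri_vertices degree common by blast
qed

lemma is_clique_tri_compl_iff:
  "is_clique (tri_vertices n) tri_compl_adj C \<longleftrightarrow>
     C \<noteq> {} \<and> C \<subseteq> tri_vertices n \<and> pairwise disjnt C"
  unfolding is_clique_def pairwise_def disjnt_def tri_compl_adj_iff by blast

lemma card_nbrs_Int_clique_tri_compl:
  assumes clique: "is_clique (tri_vertices n) tri_compl_adj C" and T: "T \<in> tri_vertices n - C"
  shows "card (nbrs (tri_vertices n) tri_compl_adj T \<inter> C) + card (T \<inter> \<Union>C) = card C"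
proof -
  have C: "C \<subseteq> tri_vertices n" "pairwise disjnt C"
    using clique by (auto simp: is_clique_tri_compl_iff)
  then have "finite C" using finite_tri_vertices finite_subset by blast
  moreover have "card S = 2" if "S \<in> C" for S using that C(1) by (auto simp: tri_vertices_def)
  moreover have "card T = 2" "T \<notin> C" using T by (auto simp: tri_vertices_def)
  moreover have "nbrs (tri_vertices n) tri_compl_adj T \<inter> C = {S \<in> C. S \<inter> T = {}}"
    using C T by (auto simp: nbrs_def tri_compl_adj_iff)
  ultimately show ?thesis
    using card_disjoint_members_add_card_Int_Union[OF _ C(2)] by simp
qed

lemma card_Union_clique_tri_compl:
  assumes "is_clique (tri_vertices n) tri_compl_adj C"
  shows "card (\<Union>C) = 2 * card C"
proof -
  have C: "C \<subseteq> tri_vertices n" "pairwise disjnt C"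
    using assms by (auto simp: is_clique_tri_compl_iff)
  then have "card (\<Union>C) = (\<Sum>S\<in>C. card S)"
    by (intro card_Union_disjoint) (auto simp: tri_vertices_def card_ge_0_finite)
  also have "\<dots> = (\<Sum>S\<in>C. 2)"
    using C by (intro sum.cong) (auto simp: tri_vertices_def)
  finally show ?thesis by simp
qed

lemma regular_clique_tri_compl_covers:
  assumes rc: "regular_clique (tri_vertices n) tri_compl_adj C a" and n: "n \<ge> 4"
  shows "\<Union>C = {1..n}"
proof (rule ccontr)
  have clique: "is_clique (tri_vertices n) tri_compl_adj C"
    using rc by (simp add: regular_clique_def)
  then have C: "C \<noteq> {}" "C \<subseteq> tri_vertices n" "pairwise disjnt C"
    by (auto simp: is_clique_tri_compl_iff)
  have meet_count_const: "card (T \<inter> \<Union>C) = card (T' \<inter> \<Union>C)"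
    if "T \<in> tri_vertices n - C" "T' \<in> tri_vertices n - C" for T T'
    using rc that card_nbrs_Int_clique_tri_compl[OF clique]
    by (auto simp: regular_clique_def) (metis add_left_cancel)
  assume "\<Union>C \<noteq> {1..n}"
  moreover have "\<Union>C \<subseteq> {1..n}" using C by (auto simp: tri_vertices_def)
  ultimately obtain p where p: "p \<in> {1..n}" "p \<notin> \<Union>C" by blast
  obtain S where S: "S \<in> C" "S \<subseteq> {1..n}" "card S = 2"
    using C by (auto simp: tri_vertices_def)
  then obtain x where x: "x \<in> S" by fastforce
  have "finite S" using S(3) by (simp add: card_ge_0_finite)
  then have "finite (insert p S)" "card (insert p S) < n"
    using S(3) n by (simp_all add: card_insert_if)
  then obtain u where u: "u \<in> {1..n}" "u \<noteq> p" "u \<notin> S"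
    by (rule ex_in_atLeastAtMost_notin) blast
  have x_covered: "x \<in> \<Union>C" and "p \<noteq> x" using S(1) x p by auto
  then have px: "{p, x} \<in> tri_vertices n - C" "card ({p, x} \<inter> \<Union>C) = 1"
    using p S x by (auto intro!: doubleton_in_tri_vertices)
  show False
  proof (cases "u \<in> \<Union>C")
    case True
    have "{x, u} \<in> tri_vertices n - C"
      using doubleton_notin_disjoint_family[OF C(3) S(1) x u(3)] S x u
      by (auto intro!: doubleton_in_tri_vertices)
    moreover have "card ({x, u} \<inter> \<Union>C) = 2"
      using True x_covered x u(3) by (auto simp: card_2_iff)
    ultimately show False using meet_count_const[OF px(1)] px(2) by fastforce
  next
    case False
    have "{p, u} \<in> tri_vertices n - C" "card ({p, u} \<inter> \<Union>C) = 0"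
      using False p u by (auto intro!: doubleton_in_tri_vertices)
    then show False using meet_count_const[OF px(1)] px(2) by fastforce
  qed
qed

lemma regular_clique_tri_compl_params:
  assumes rc: "regular_clique (tri_vertices n) tri_compl_adj C a" and n: "n \<ge> 4"
  shows "n = 2 * card C" "a + 2 = card C"
proof -
  have clique: "is_clique (tri_vertices n) tri_compl_adj C"
    using rc by (simp add: regular_clique_def)
  then have C: "C \<noteq> {}" "C \<subseteq> tri_vertices n" "pairwise disjnt C"
    by (auto simp: is_clique_tri_compl_iff)
  have cover: "\<Union>C = {1..n}" using regular_clique_tri_compl_covers[OF rc n] .
  then show "n = 2 * card C" using card_Union_clique_tri_compl[OF clique] by simp
  obtain S where S: "S \<in> C" "S \<subseteq> {1..n}" "card S = 2"
    using C by (auto simp: tri_vertices_def)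
  then obtain x where x: "x \<in> S" by fastforce
  have "finite S" "card S < n" using S(3) n by (simp_all add: card_ge_0_finite)
  then obtain u where u: "u \<in> {1..n}" "u \<notin> S"
    by (rule ex_in_atLeastAtMost_notin)
  have xu: "{x, u} \<in> tri_vertices n - C"
    using doubleton_notin_disjoint_family[OF C(3) S(1) x u(2)] S x u
    by (auto intro!: doubleton_in_tri_vertices)
  have "{x, u} \<inter> \<Union>C = {x, u}" "x \<noteq> u" using cover S x u by auto
  then have "card ({x, u} \<inter> \<Union>C) = 2" by simp
  moreover have "card (nbrs (tri_vertices n) tri_compl_adj {x, u} \<inter> C) = a"
    using rc xu by (simp add: regular_clique_def)
  ultimately show "a + 2 = card C"
    using card_nbrs_Int_clique_tri_compl[OF clique xu] by simp
qed

lemma perfect_matching_regular_clique_tri_compl: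
  assumes clique: "is_clique (tri_vertices n) tri_compl_adj C" and cover: "\<Union>C = {1..n}"
  shows "regular_clique (tri_vertices n) tri_compl_adj C (card C - 2)"
proof -
  have "card (nbrs (tri_vertices n) tri_compl_adj T \<inter> C) = card C - 2"
    if "T \<in> tri_vertices n - C" for T
  proof -
    have "T \<inter> \<Union>C = T" "card T = 2" using that cover by (auto simp: tri_vertices_def)
    then show ?thesis using card_nbrs_Int_clique_tri_compl[OF clique that] by simp
  qed
  then show ?thesis using clique by (simp add: regular_clique_def)
qed

lemma perfect_matching_tri_compl_exists:
  assumes "even n" "n > 0"
  obtains C where "is_clique (tri_vertices n) tri_compl_adj C" "\<Union>C = {1..n}"
proof
  define C where "C = (\<lambda>i. {2 * i + 1, 2 * i + 2}) ` {..<n div 2}"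
  show "is_clique (tri_vertices n) tri_compl_adj C"
    unfolding is_clique_tri_compl_iff
  proof (intro conjI)
    have "n div 2 > 0" using assms by (auto elim: evenE)
    then show "C \<noteq> {}" by (auto simp: C_def)
    show "C \<subseteq> tri_vertices n"
      using assms by (auto simp: C_def intro!: doubleton_in_tri_vertices)
    show "pairwise disjnt C"
      unfolding C_def pairwise_def disjnt_def by auto presburger+
  qed
  show "\<Union>C = {1..n}"
  proof
    show "\<Union>C \<subseteq> {1..n}" using assms by (auto simp: C_def)
    show "{1..n} \<subseteq> \<Union>C"
    proof
      fix j assume "j \<in> {1..n}"
      then have "(j - 1) div 2 < n div 2" "j = 2 * ((j - 1) div 2) + 1 \<or> j = 2 * ((j - 1) div 2) + 2"
        using assms by auto
      then show "j \<in> \<Union>C" unfolding C_def by blast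
    qed
  qed
qed

theorem lemma4p8:
  fixes n :: nat
  assumes "n \<ge> 5"
  shows "(neumaier_graph (tri_vertices n) tri_compl_adj \<longleftrightarrow> even n) \<and>
         (\<forall>k lam mu a c.
            srg_neumaier_params (tri_vertices n) tri_compl_adj (n choose 2) k lam mu a c
            \<longrightarrow> n = 2 * a + 4 \<and> c = a + 2)"
proof
  have params: "n = 2 * card C" "a + 2 = card C"
    if "regular_clique (tri_vertices n) tri_compl_adj C a" for C a
    using regular_clique_tri_compl_params[OF that] assms by simp_all
  show "neumaier_graph (tri_vertices n) tri_compl_adj \<longleftrightarrow> even n"
  proof
    assume "neumaier_graph (tri_vertices n) tri_compl_adj"
    then obtain C a where "regular_clique (tri_vertices n) tri_compl_adj C a"
      unfolding neumaier_graph_def by blast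
    then show "even n" using params(1) by (metis dvd_triv_left)
  next
    assume "even n"
    moreover have "n > 0" using assms by simp
    ultimately obtain C where "is_clique (tri_vertices n) tri_compl_adj C" "\<Union>C = {1..n}"
      by (rule perfect_matching_tri_compl_exists)
    then show "neumaier_graph (tri_vertices n) tri_compl_adj"
      unfolding neumaier_graph_def card_tri_vertices
      using perfect_matching_regular_clique_tri_compl not_complete_tri_compl
        edge_regular_tri_compl assms by fastforce
  qed
  show "\<forall>k lam mu a c.
      srg_neumaier_params (tri_vertices n) tri_compl_adj (n choose 2) k lam mu a c
      \<longrightarrow> n = 2 * a + 4 \<and> c = a + 2"
    unfolding srg_neumaier_params_def neumaier_params_def using params by fastforce
qed

end
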